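(* Let $\Gamma$ be a finitely generated discrete group with finite symmetric generating set $Q$, let $Z\subseteq\mathrm{Sub}(\Gamma)$ be a uniformly recurrent subgroup, and let $H\in Z$. If $Z$ is generic, then the groupoid $\mathcal{G}_H$ is principal.
   Context: Word length $l(\gamma)$ is taken with respect to $Q$. $\mathrm{Sub}(\Gamma)$ is the space of subgroups of $\Gamma$ with the topology of pointwise convergence of indicator functions, with $\Gamma$ acting by conjugation $\gamma.H=\gamma H\gamma^{-1}$. A uniformly recurrent subgroup (URS) is a nonempty closed $\Gamma$-invariant subset $Z\subseteq\mathrm{Sub}(\Gamma)$ on which every $\Gamma$-orbit is dense. $Z$ is generic if for every $H'\in Z$ the stabiliser $\{\gamma\in\Gamma:\gamma H'\gamma^{-1}=H'\}$ equals $H'$. A groupoid is principal if every arrow whose range equals its source is a unit. For $H\le\Gamma$, the Schreier graph $S(H)$ is the rooted labeled graph with vertex set $\Gamma/H$, root $H$, and for each $\gamma H$ and $q\in Q$ an edge from $\gamma H$ to $q\gamma H$ labeled $q$; $B_n(S,p)$ is the ball of radius $n$ (path metric) around $p$; root-label isomorphism means graph isomorphism preserving roots and labels. The groupoid $\mathcal{G}_H$: write $S=S(H)$. For $p\in\Gamma/H$, $n\ge0$ let $[p]_n$ be the root-label isomorphism class of $(B_n(S,p),p)$; $E_n=\{[p]_n\}$ with maps $[p]_{n+1}\mapsto[p]_n$; $\mathcal{G}_H^0=\varprojlim E_n$. For $x=(x_n)\in\mathcal{G}_H^0$ choose $p_n$ with $x_n=[p_n]_n$. Arrows are classes of pairs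 $(x,\gamma)$, $x\in\mathcal{G}_H^0$, $\gamma\in\Gamma$, with $(x,\gamma)\sim(x,\gamma')$ iff $\gamma p_n=\gamma'p_n$ for all large $n$. Range $r(x,\gamma)=x$, source $\gamma.x$ with $(\gamma.x)_n=[\gamma p_{n+l(\gamma)}]_n$, product $(x,\gamma')(\gamma'.x,\gamma)=(x,\gamma\gamma')$, inverse $(\gamma.x,\gamma^{-1})$, units $(x,e)$. *)

theory Defs
  imports "HOL-Algebra.Algebra"
begin

definition fg_sym_gen :: "('a,'b) monoid_scheme \<Rightarrow> 'a set \<Rightarrow> bool" where
  "fg_sym_gen G Q \<longleftrightarrow> finite Q \<and> Q \<subseteq> carrier G \<and> (\<forall>q\<in>Q. inv\<^bsub>G\<^esub> q \<in> Q)
      \<and> generate G Q = carrier G"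

definition word_val :: "('a,'b) monoid_scheme \<Rightarrow> 'a list \<Rightarrow> 'a" where
  "word_val G ws = foldr (\<lambda>a b. a \<otimes>\<^bsub>G\<^esub> b) ws \<one>\<^bsub>G\<^esub>"

definition word_length :: "('a,'b) monoid_scheme \<Rightarrow> 'a set \<Rightarrow> 'a \<Rightarrow> nat" where
  "word_length G Q g = (LEAST n. \<exists>ws. set ws \<subseteq> Q \<and> length ws = n \<and> word_val G ws = g)"

definition Sub :: "('a,'b) monoid_scheme \<Rightarrow> 'a set set" where
  "Sub G = {K. subgroup K G}"

definition conjg :: "('a,'b) monoid_scheme \<Rightarrow> 'a \<Rightarrow> 'a set \<Rightarrow> 'a set" where
  "conjg G g K = {g \<otimes>\<^bsub>G\<^esub> k \<otimes>\<^bsub>G\<^esub> inv\<^bsub>G\<^esub> g | k. k \<in> K}"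

(* Basic open sets of the topology of pointwise convergence of indicator functions
   (= product topology on {0,1}^Gamma restricted to Sub(Gamma)):
   the subgroups agreeing with K on a finite set F. *)
definition basic_nbhd :: "('a,'b) monoid_scheme \<Rightarrow> 'a set \<Rightarrow> 'a set \<Rightarrow> 'a set set" where
  "basic_nbhd G K F = {K' \<in> Sub G. K' \<inter> F = K \<inter> F}"

definition closed_in_Sub :: "('a,'b) monoid_scheme \<Rightarrow> 'a set set \<Rightarrow> bool" where
  "closed_in_Sub G Z \<longleftrightarrow> Z \<subseteq> Sub G \<and>
     (\<forall>K \<in> Sub G - Z. \<exists>F. finite F \<and> F \<subseteq> carrier G \<and> basic_nbhd G K F \<inter> Z = {})"

definition URS :: "('a,'b) monoid_scheme \<Rightarrow> 'a set set \<Rightarrow> bool" where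
  "URS G Z \<longleftrightarrow> Z \<noteq> {} \<and> closed_in_Sub G Z \<and>
     (\<forall>g \<in> carrier G. \<forall>K \<in> Z. conjg G g K \<in> Z) \<and>
     (\<forall>K \<in> Z. \<forall>K' \<in> Z. \<forall>F. finite F \<and> F \<subseteq> carrier G \<longrightarrow>
        (\<exists>g \<in> carrier G. conjg G g K \<in> basic_nbhd G K' F))"

definition generic_URS :: "('a,'b) monoid_scheme \<Rightarrow> 'a set set \<Rightarrow> bool" where
  "generic_URS G Z \<longleftrightarrow> (\<forall>K \<in> Z. {g \<in> carrier G. conjg G g K = K} = K)"

(* Schreier graph S(H): vertices Gamma/H (left cosets), edges c --q--> q c *)
definition sverts :: "('a,'b) monoid_scheme \<Rightarrow> 'a set \<Rightarrow> 'a set set" where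
  "sverts G H = {g <#\<^bsub>G\<^esub> H | g. g \<in> carrier G}"

(* closed ball of radius n around p in the path metric (Q symmetric, so directed and
   undirected path lengths agree) *)
definition sball :: "('a,'b) monoid_scheme \<Rightarrow> 'a set \<Rightarrow> 'a set \<Rightarrow> nat \<Rightarrow> 'a set \<Rightarrow> 'a set set" where
  "sball G Q H n p = {c \<in> sverts G H. \<exists>ws. set ws \<subseteq> Q \<and> length ws \<le> n \<and>
                                          word_val G ws <#\<^bsub>G\<^esub> p = c}"

(* root-label isomorphism between (B_n(S,p),p) and (B_n(S,p'),p'); the ball carries all
   labelled edges of S(H) between its vertices *)
definition rl_iso :: "('a,'b) monoid_scheme \<Rightarrow> 'a set \<Rightarrow> 'a set \<Rightarrow> nat \<Rightarrow> 'a set \<Rightarrow> 'a set \<Rightarrow> bool" where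
  "rl_iso G Q H n p p' \<longleftrightarrow> (\<exists>f. bij_betw f (sball G Q H n p) (sball G Q H n p') \<and> f p = p' \<and>
      (\<forall>c \<in> sball G Q H n p. \<forall>c' \<in> sball G Q H n p. \<forall>q \<in> Q.
          (q <#\<^bsub>G\<^esub> c = c') \<longleftrightarrow> (q <#\<^bsub>G\<^esub> f c = f c')))"

(* [p]_n, represented as the set of vertices with root-label isomorphic n-balls *)
definition cls :: "('a,'b) monoid_scheme \<Rightarrow> 'a set \<Rightarrow> 'a set \<Rightarrow> nat \<Rightarrow> 'a set \<Rightarrow> 'a set set" where
  "cls G Q H n p = {p' \<in> sverts G H. rl_iso G Q H n p p'}"

definition En :: "('a,'b) monoid_scheme \<Rightarrow> 'a set \<Rightarrow> 'a set \<Rightarrow> nat \<Rightarrow> 'a set set set" where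
  "En G Q H n = cls G Q H n ` sverts G H"

(* G_H^0 = inverse limit of E_n along [p]_{n+1} |-> [p]_n *)
definition units_GH :: "('a,'b) monoid_scheme \<Rightarrow> 'a set \<Rightarrow> 'a set \<Rightarrow> (nat \<Rightarrow> 'a set set) set" where
  "units_GH G Q H = {x. \<forall>n. x n \<in> En G Q H n \<and> (\<forall>p \<in> x (Suc n). x n = cls G Q H n p)}"

definition rep :: "(nat \<Rightarrow> 'a set set) \<Rightarrow> nat \<Rightarrow> 'a set" where
  "rep x n = (SOME p. p \<in> x n)"

(* source of the arrow (x,gamma): (gamma.x)_n = [gamma p_{n+l(gamma)}]_n *)
definition act_GH :: "('a,'b) monoid_scheme \<Rightarrow> 'a set \<Rightarrow> 'a set \<Rightarrow> 'a \<Rightarrow> (nat \<Rightarrow> 'a set set) \<Rightarrow> nat \<Rightarrow> 'a set set" where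
  "act_GH G Q H g x = (\<lambda>n. cls G Q H n (g <#\<^bsub>G\<^esub> rep x (n + word_length G Q g)))"

definition arrow_equiv :: "('a,'b) monoid_scheme \<Rightarrow> (nat \<Rightarrow> 'a set set) \<Rightarrow> 'a \<Rightarrow> 'a \<Rightarrow> bool" where
  "arrow_equiv G x g g' \<longleftrightarrow> (\<exists>N. \<forall>n\<ge>N. g <#\<^bsub>G\<^esub> rep x n = g' <#\<^bsub>G\<^esub> rep x n)"

(* G_H is principal: every arrow [(x,gamma)] whose range x equals its source gamma.x
   is a unit, i.e. equals [(x,e)] *)
definition principal_GH :: "('a,'b) monoid_scheme \<Rightarrow> 'a set \<Rightarrow> 'a set \<Rightarrow> bool" where
  "principal_GH G Q H \<longleftrightarrow> (\<forall>x \<in> units_GH G Q H. \<forall>g \<in> carrier G.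
       act_GH G Q H g x = x \<longrightarrow> arrow_equiv G x g \<one>\<^bsub>G\<^esub>)"

end

theory Submission
  imports Defs
begin

(* Fix a unit x with representatives p_n. Whether a word of length at most n fixes the
   vertex p_n depends only on the class [p_n]_n, so the answers stabilise as n grows and
   define the eventual stabiliser H_x = {gamma | gamma p_n = p_n for all large n}, a subgroup.
   Since Stab(p_n) is a conjugate of H, the subgroup H_x is a limit of conjugates of H and
   lies in Z because Z is closed and invariant.
   If gamma.x = x, the balls around gamma p_(n + l(gamma)) and around p_n are isomorphic,
   which gives gamma H_x gamma^-1 = H_x; genericity yields gamma in H_x, i.e. gamma fixes
   p_n for all large n, so the arrow (x, gamma) is the unit at x. *)

lemma word_val_Nil [simp]: "word_val G [] = \<one>\<^bsub>G\<^esub>"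
  by (simp add: word_val_def)

lemma word_val_Cons [simp]: "word_val G (q # ws) = q \<otimes>\<^bsub>G\<^esub> word_val G ws"
  by (simp add: word_val_def)

context group
begin

lemma word_val_closed [intro, simp]: "set ws \<subseteq> carrier G \<Longrightarrow> word_val G ws \<in> carrier G"
  by (induction ws) auto

lemma word_val_append:
  "set ws \<subseteq> carrier G \<Longrightarrow> set vs \<subseteq> carrier G \<Longrightarrow>
    word_val G (ws @ vs) = word_val G ws \<otimes> word_val G vs"
  by (induction ws) (auto simp: m_assoc)

lemma word_val_rev_map_inv:
  "set ws \<subseteq> carrier G \<Longrightarrow> word_val G (rev (map (\<lambda>q. inv q) ws)) = inv (word_val G ws)"
proof (induction ws)
  case (Cons a ws)
  have "word_val G (rev (map (\<lambda>q. inv q) (a # ws)))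
      = word_val G (rev (map (\<lambda>q. inv q) ws)) \<otimes> word_val G [inv a]"
    using Cons.prems word_val_append[of "rev (map (\<lambda>q. inv q) ws)" "[inv a]"] by auto
  also have "\<dots> = inv (word_val G ws) \<otimes> inv a"
    using Cons by simp
  also have "\<dots> = inv (word_val G (a # ws))"
    using Cons.prems by (simp add: inv_mult_group)
  finally show ?case .
qed simp

lemma word_val_conj:
  assumes "set ws \<subseteq> carrier G" and "set vs \<subseteq> carrier G"
  shows "word_val G (rev (map (\<lambda>q. inv q) ws) @ vs @ ws)
    = inv (word_val G ws) \<otimes> word_val G vs \<otimes> word_val G ws"
proof -
  have "set (rev (map (\<lambda>q. inv q) ws)) \<subseteq> carrier G"
    using assms(1) by auto
  then show ?thesis
    using assms by (simp add: word_val_append word_val_rev_map_inv m_assoc)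
qed

lemma word_val_generate:
  assumes "Q \<subseteq> carrier G" and "\<forall>q\<in>Q. inv q \<in> Q" and "y \<in> generate G Q"
  shows "\<exists>ws. set ws \<subseteq> Q \<and> word_val G ws = y"
  using assms(3)
proof (induction rule: generate.induct)
  case one
  show ?case by (intro exI[of _ "[]"]) simp
next
  case (incl h)
  then show ?case using assms(1) by (intro exI[of _ "[h]"]) auto
next
  case (inv h)
  then show ?case using assms by (intro exI[of _ "[inv h]"]) auto
next
  case (eng h1 h2)
  then obtain w1 w2 where "set w1 \<subseteq> Q" "word_val G w1 = h1" "set w2 \<subseteq> Q" "word_val G w2 = h2"
    by blast
  moreover have "set w1 \<subseteq> carrier G" and "set w2 \<subseteq> carrier G"
    using \<open>set w1 \<subseteq> Q\<close> \<open>set w2 \<subseteq> Q\<close> assms(1) by auto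
  ultimately have "set (w1 @ w2) \<subseteq> Q" and "word_val G (w1 @ w2) = h1 \<otimes> h2"
    using word_val_append by auto
  then show ?case by blast
qed

lemma fg_sym_gen_word:
  assumes "fg_sym_gen G Q" and "y \<in> carrier G"
  obtains ws where "set ws \<subseteq> Q" and "word_val G ws = y"
proof -
  have Q: "Q \<subseteq> carrier G" and sym: "\<forall>q\<in>Q. inv q \<in> Q" and gen: "generate G Q = carrier G"
    using assms(1) unfolding fg_sym_gen_def by blast+
  have "y \<in> generate G Q"
    using gen assms(2) by simp
  then show thesis
    using word_val_generate[OF Q sym] that by blast
qed

lemma fg_sym_gen_shortest_word:
  assumes "fg_sym_gen G Q" and "g \<in> carrier G"
  obtains ws where "set ws \<subseteq> Q" and "length ws = word_length G Q g" and "word_val G ws = g"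
proof -
  obtain ws where "set ws \<subseteq> Q" and "word_val G ws = g"
    using fg_sym_gen_word[OF assms] .
  then have "\<exists>n ws. set ws \<subseteq> Q \<and> length ws = n \<and> word_val G ws = g"
    by blast
  then have "\<exists>ws. set ws \<subseteq> Q \<and> length ws = word_length G Q g \<and> word_val G ws = g"
    unfolding word_length_def by (rule LeastI_ex)
  then show thesis using that by blast
qed

lemma conjg_mem_iff:
  assumes "K \<subseteq> carrier G" and "a \<in> carrier G" and "y \<in> carrier G"
  shows "y \<in> conjg G a K \<longleftrightarrow> inv a \<otimes> y \<otimes> a \<in> K"
proof -
  have "y = a \<otimes> k \<otimes> inv a \<longleftrightarrow> inv a \<otimes> y \<otimes> a = k" if "k \<in> carrier G" for k
  proof
    show "inv a \<otimes> y \<otimes> a = k" if "y = a \<otimes> k \<otimes> inv a"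
      using that assms(2) \<open>k \<in> carrier G\<close> by (metis inv_closed l_inv m_assoc m_closed r_one l_one)
    show "y = a \<otimes> k \<otimes> inv a" if "inv a \<otimes> y \<otimes> a = k"
      using that assms(2,3) by (metis inv_closed m_assoc m_closed r_inv r_one l_one)
  qed
  then have "(\<exists>k\<in>K. y = a \<otimes> k \<otimes> inv a) \<longleftrightarrow> (\<exists>k\<in>K. inv a \<otimes> y \<otimes> a = k)"
    using assms(1) by blast
  moreover have "y \<in> conjg G a K \<longleftrightarrow> (\<exists>k\<in>K. y = a \<otimes> k \<otimes> inv a)"
    unfolding conjg_def by blast
  ultimately show ?thesis by simp
qed

lemma lcos_fixed_iff_conj:
  assumes "g \<in> carrier G" and "c \<subseteq> carrier G" and "y \<in> carrier G"
  shows "y <# (g <# c) = g <# c \<longleftrightarrow> (inv g \<otimes> y \<otimes> g) <# c = c"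
proof -
  have "inv g <# (y <# (g <# c)) = (inv g \<otimes> y \<otimes> g) <# c"
    using assms by (simp add: lcos_m_assoc m_assoc)
  moreover have "g <# ((inv g \<otimes> y \<otimes> g) <# c) = y <# (g <# c)"
    using assms by (simp add: lcos_m_assoc m_assoc[symmetric] lcos_mult_one)
  moreover have "inv g <# (g <# c) = c" and "g <# (inv g <# c) = c"
    using assms by (simp_all add: lcos_m_assoc lcos_mult_one)
  ultimately show ?thesis by metis
qed

lemma lcos_eq_self_iff:
  assumes "subgroup K G" and "d \<in> carrier G"
  shows "d <# K = K \<longleftrightarrow> d \<in> K"
  using assms lcos_self coset_join3 by metis

lemma lcos_stabiliser_eq_conjg:
  assumes "subgroup K G" and "a \<in> carrier G" and "y \<in> carrier G"
  shows "y <# (a <# K) = a <# K \<longleftrightarrow> y \<in> conjg G a K"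
proof -
  have K: "K \<subseteq> carrier G"
    using assms(1) by (rule subgroup.subset)
  have "y <# (a <# K) = a <# K \<longleftrightarrow> (inv a \<otimes> y \<otimes> a) <# K = K"
    using lcos_fixed_iff_conj[OF assms(2) K assms(3)] .
  also have "\<dots> \<longleftrightarrow> inv a \<otimes> y \<otimes> a \<in> K"
    using assms by (simp add: lcos_eq_self_iff)
  also have "\<dots> \<longleftrightarrow> y \<in> conjg G a K"
    using conjg_mem_iff[OF K assms(2,3)] by simp
  finally show ?thesis .
qed

lemma conjg_eq_self:
  assumes "K \<subseteq> carrier G" and "g \<in> carrier G"
    and "\<And>y. y \<in> carrier G \<Longrightarrow> inv g \<otimes> y \<otimes> g \<in> K \<longleftrightarrow> y \<in> K"
  shows "conjg G g K = K"
proof -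
  have "conjg G g K \<subseteq> carrier G"
    using assms(1,2) unfolding conjg_def by blast
  then show ?thesis
    using assms conjg_mem_iff by blast
qed

end

definition eventual_stabiliser :: "('a, 'b) monoid_scheme \<Rightarrow> (nat \<Rightarrow> 'a set) \<Rightarrow> 'a set" where
  "eventual_stabiliser G P = {y \<in> carrier G. \<exists>N. \<forall>m\<ge>N. y <#\<^bsub>G\<^esub> P m = P m}"

lemma (in group) subgroup_eventual_stabiliser:
  assumes P: "\<And>m. P m \<subseteq> carrier G"
  shows "subgroup (eventual_stabiliser G P) G"
proof (rule subgroupI)
  show "eventual_stabiliser G P \<subseteq> carrier G"
    unfolding eventual_stabiliser_def by auto
  show "eventual_stabiliser G P \<noteq> {}"
    unfolding eventual_stabiliser_def using P lcos_mult_one by auto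
next
  fix a assume "a \<in> eventual_stabiliser G P"
  then obtain N where a: "a \<in> carrier G" and fix_a: "\<forall>m\<ge>N. a <# P m = P m"
    unfolding eventual_stabiliser_def by blast
  have "inv a <# P m = P m" if "m \<ge> N" for m
  proof -
    have "inv a <# P m = inv a <# (a <# P m)"
      using fix_a that by simp
    also have "\<dots> = P m"
      using a P by (simp add: lcos_m_assoc lcos_mult_one)
    finally show ?thesis .
  qed
  then show "inv a \<in> eventual_stabiliser G P"
    unfolding eventual_stabiliser_def using a by auto
next
  fix a b assume "a \<in> eventual_stabiliser G P" and "b \<in> eventual_stabiliser G P"
  then obtain N1 N2 where a: "a \<in> carrier G" "\<forall>m\<ge>N1. a <# P m = P m"
    and b: "b \<in> carrier G" "\<forall>m\<ge>N2. b <# P m = P m"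
    unfolding eventual_stabiliser_def by blast
  have "(a \<otimes> b) <# P m = P m" if "m \<ge> max N1 N2" for m
    using a b P that by (simp add: lcos_m_assoc[symmetric])
  then show "a \<otimes> b \<in> eventual_stabiliser G P"
    unfolding eventual_stabiliser_def using a b by blast
qed

lemma closed_in_Sub_memI:
  assumes "closed_in_Sub G Z" and "subgroup K G"
    and "\<And>F. finite F \<Longrightarrow> F \<subseteq> carrier G \<Longrightarrow> \<exists>K'\<in>Z. K' \<inter> F = K \<inter> F"
  shows "K \<in> Z"
proof (rule ccontr)
  assume "K \<notin> Z"
  with assms(1,2) obtain F where "finite F" "F \<subseteq> carrier G" "basic_nbhd G K F \<inter> Z = {}"
    unfolding closed_in_Sub_def Sub_def by blast
  moreover obtain K' where "K' \<in> Z" "K' \<inter> F = K \<inter> F"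
    using assms(3) calculation(1,2) by blast
  moreover have "K' \<in> Sub G"
    using assms(1) \<open>K' \<in> Z\<close> unfolding closed_in_Sub_def by blast
  ultimately show False
    unfolding basic_nbhd_def by blast
qed

locale schreier_graph = group G for G (structure) +
  fixes Q :: "'a set" and H :: "'a set"
  assumes gens_subset_carrier: "Q \<subseteq> carrier G"
    and subgroup_H: "subgroup H G"
begin

lemma sverts_subset_carrier: "p \<in> sverts G H \<Longrightarrow> p \<subseteq> carrier G"
  using subgroup_H by (auto simp: sverts_def intro: l_coset_carrier)

lemma sverts_lcos_closed: "p \<in> sverts G H \<Longrightarrow> g \<in> carrier G \<Longrightarrow> g <# p \<in> sverts G H"
  using subgroup.subset[OF subgroup_H] by (auto simp: sverts_def lcos_m_assoc)

lemma self_mem_cls: "p \<in> sverts G H \<Longrightarrow> p \<in> cls G Q H n p"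
  unfolding cls_def rl_iso_def by (auto intro!: exI[of _ id])

lemma set_word_subset_carrier: "set ws \<subseteq> Q \<Longrightarrow> set ws \<subseteq> carrier G"
  using gens_subset_carrier by blast

lemma word_lcos_mem_sball:
  assumes "p \<in> sverts G H" and "set ws \<subseteq> Q" and "length ws \<le> n"
  shows "word_val G ws <# p \<in> sball G Q H n p"
  using assms sverts_lcos_closed set_word_subset_carrier unfolding sball_def by blast

lemma sball_iso_word_lcos:
  assumes edges: "\<forall>c \<in> sball G Q H k p. \<forall>c' \<in> sball G Q H k p. \<forall>q \<in> Q.
      q <# c = c' \<longleftrightarrow> q <# f c = f c'"
    and root: "f p = p'" and p: "p \<in> sverts G H" and p': "p' \<in> sverts G H"
    and ws: "set ws \<subseteq> Q" "length ws \<le> k"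
  shows "f (word_val G ws <# p) = word_val G ws <# p'"
  using ws
proof (induction ws)
  case Nil
  then show ?case
    using root sverts_subset_carrier[OF p] sverts_subset_carrier[OF p'] by (simp add: lcos_mult_one)
next
  case (Cons q ws)
  let ?w = "word_val G ws"
  have q: "q \<in> Q" "q \<in> carrier G" and w: "?w \<in> carrier G"
    using Cons.prems gens_subset_carrier by auto
  have qw: "word_val G (q # ws) <# p = q <# (?w <# p)"
    and qw': "word_val G (q # ws) <# p' = q <# (?w <# p')"
    using q w sverts_subset_carrier[OF p] sverts_subset_carrier[OF p'] by (simp_all add: lcos_m_assoc)
  have "?w <# p \<in> sball G Q H k p" and "q <# (?w <# p) \<in> sball G Q H k p"
    using word_lcos_mem_sball[OF p Cons.prems] word_lcos_mem_sball[OF p, of ws k] Cons.prems qw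
    by auto
  with edges q(1) have "q <# f (?w <# p) = f (q <# (?w <# p))"
    by blast
  then show ?case
    using Cons qw qw' by simp
qed

lemma rl_iso_word_fixes_iff:
  assumes "rl_iso G Q H k p p'" and p: "p \<in> sverts G H" and p': "p' \<in> sverts G H"
    and ws: "set ws \<subseteq> Q" "length ws \<le> k"
  shows "word_val G ws <# p = p \<longleftrightarrow> word_val G ws <# p' = p'"
proof -
  obtain f where bij: "bij_betw f (sball G Q H k p) (sball G Q H k p')" and root: "f p = p'"
    and edges: "\<forall>c \<in> sball G Q H k p. \<forall>c' \<in> sball G Q H k p. \<forall>q \<in> Q.
      q <# c = c' \<longleftrightarrow> q <# f c = f c'"
    using assms(1) unfolding rl_iso_def by blast
  have f_word: "f (word_val G ws <# p) = word_val G ws <# p'"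
    using sball_iso_word_lcos[OF edges root p p' ws] .
  have "word_val G ws <# p \<in> sball G Q H k p" and "p \<in> sball G Q H k p"
    using word_lcos_mem_sball[OF p ws] word_lcos_mem_sball[OF p, of "[]"] sverts_subset_carrier[OF p]
    by (auto simp: lcos_mult_one)
  then have "word_val G ws <# p = p \<longleftrightarrow> f (word_val G ws <# p) = f p"
    using bij_betw_imp_inj_on[OF bij] by (simp add: inj_on_eq_iff)
  then show ?thesis
    using f_word root by simp
qed

lemma units_GH_subset_sverts:
  assumes "x \<in> units_GH G Q H"
  shows "x n \<subseteq> sverts G H"
  using assms by (auto simp: units_GH_def En_def cls_def)

lemma rep_mem_units_GH:
  assumes "x \<in> units_GH G Q H"
  shows "rep x n \<in> x n"
proof -
  have "x n \<in> En G Q H n"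
    using assms by (simp add: units_GH_def)
  then obtain p where "p \<in> sverts G H" and "x n = cls G Q H n p"
    by (auto simp: En_def)
  then have "p \<in> x n"
    using self_mem_cls by simp
  then show ?thesis
    unfolding rep_def by (rule someI)
qed

lemma rep_subset_carrier: "x \<in> units_GH G Q H \<Longrightarrow> rep x n \<subseteq> carrier G"
  using rep_mem_units_GH units_GH_subset_sverts sverts_subset_carrier by blast

lemma units_GH_rl_iso:
  assumes "x \<in> units_GH G Q H" and "p \<in> x (Suc n)" and "p' \<in> x n"
  shows "rl_iso G Q H n p p'"
  using assms by (auto simp: units_GH_def cls_def)

lemma units_GH_word_fixes_iff:
  assumes x: "x \<in> units_GH G Q H" and "p \<in> x n" and "p' \<in> x n"
    and ws: "set ws \<subseteq> Q" "length ws \<le> n"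
  shows "word_val G ws <# p = p \<longleftrightarrow> word_val G ws <# p' = p'"
proof -
  let ?r = "rep x (Suc n)"
  have r: "?r \<in> x (Suc n)" "?r \<in> sverts G H"
    using rep_mem_units_GH[OF x] units_GH_subset_sverts[OF x] by auto
  have "p \<in> sverts G H" and "p' \<in> sverts G H"
    using assms(2,3) units_GH_subset_sverts[OF x] by auto
  then show ?thesis
    using rl_iso_word_fixes_iff[OF units_GH_rl_iso[OF x r(1) assms(2)] r(2) _ ws]
      rl_iso_word_fixes_iff[OF units_GH_rl_iso[OF x r(1) assms(3)] r(2) _ ws]
    by simp
qed

lemma rep_word_fixes_iff:
  assumes x: "x \<in> units_GH G Q H" and ws: "set ws \<subseteq> Q" "length ws \<le> n" and "n \<le> m"
  shows "word_val G ws <# rep x m = rep x m \<longleftrightarrow> word_val G ws <# rep x n = rep x n"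
  using \<open>n \<le> m\<close>
proof (induction m rule: dec_induct)
  case (step m)
  have "rep x (Suc m) \<in> x (Suc m)" and "rep x m \<in> x m"
    using rep_mem_units_GH[OF x] by auto
  moreover from calculation have "rep x (Suc m) \<in> sverts G H" and "rep x m \<in> sverts G H"
    using units_GH_subset_sverts[OF x] by auto
  ultimately show ?case
    using rl_iso_word_fixes_iff[OF units_GH_rl_iso[OF x] _ _ ws(1)] step ws(2) by simp
qed simp

lemma eventual_stabiliser_word_iff:
  assumes x: "x \<in> units_GH G Q H" and ws: "set ws \<subseteq> Q" "length ws \<le> k"
  shows "word_val G ws \<in> eventual_stabiliser G (rep x) \<longleftrightarrow> word_val G ws <# rep x k = rep x k"
proof
  assume "word_val G ws \<in> eventual_stabiliser G (rep x)"
  then obtain N where "\<forall>m\<ge>N. word_val G ws <# rep x m = rep x m"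
    unfolding eventual_stabiliser_def by blast
  then show "word_val G ws <# rep x k = rep x k"
    using rep_word_fixes_iff[OF x ws, of "max N k"] by simp
next
  assume "word_val G ws <# rep x k = rep x k"
  then have "\<forall>m\<ge>k. word_val G ws <# rep x m = rep x m"
    using rep_word_fixes_iff[OF x ws] by blast
  then show "word_val G ws \<in> eventual_stabiliser G (rep x)"
    unfolding eventual_stabiliser_def using ws(1) set_word_subset_carrier by blast
qed

lemma arrow_equiv_one_iff:
  assumes "x \<in> units_GH G Q H" and "g \<in> carrier G"
  shows "arrow_equiv G x g \<one> \<longleftrightarrow> g \<in> eventual_stabiliser G (rep x)"
  using assms rep_subset_carrier lcos_mult_one
  unfolding arrow_equiv_def eventual_stabiliser_def by simp

lemma eventual_stabiliser_locally_conjg: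
  assumes gen: "fg_sym_gen G Q" and x: "x \<in> units_GH G Q H"
    and F: "finite F" "F \<subseteq> carrier G"
  obtains a where "a \<in> carrier G" and "conjg G a H \<inter> F = eventual_stabiliser G (rep x) \<inter> F"
proof -
  have "\<forall>y\<in>F. \<exists>ws. set ws \<subseteq> Q \<and> word_val G ws = y"
    using fg_sym_gen_word[OF gen] F(2) by (metis subsetD)
  then obtain w where w: "\<And>y. y \<in> F \<Longrightarrow> set (w y) \<subseteq> Q \<and> word_val G (w y) = y"
    by metis
  define M where "M = Max ((\<lambda>y. length (w y)) ` F)"
  have w_short: "length (w y) \<le> M" if "y \<in> F" for y
    unfolding M_def using F(1) that by simp
  have "rep x M \<in> sverts G H"
    using rep_mem_units_GH[OF x] units_GH_subset_sverts[OF x] by blast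
  then obtain a where a: "a \<in> carrier G" and rep_M: "rep x M = a <# H"
    unfolding sverts_def by blast
  have "y \<in> eventual_stabiliser G (rep x) \<longleftrightarrow> y \<in> conjg G a H" if "y \<in> F" for y
  proof -
    have "y \<in> eventual_stabiliser G (rep x) \<longleftrightarrow> y <# rep x M = rep x M"
      using eventual_stabiliser_word_iff[OF x _ w_short[OF that]] w[OF that] by simp
    also have "\<dots> \<longleftrightarrow> y \<in> conjg G a H"
      using lcos_stabiliser_eq_conjg[OF subgroup_H a] that F(2) rep_M by auto
    finally show ?thesis .
  qed
  then show thesis
    using that a by blast
qed

lemma eventual_stabiliser_mem_closed_invariant:
  assumes gen: "fg_sym_gen G Q" and Z_closed: "closed_in_Sub G Z"
    and Z_conj: "\<forall>a\<in>carrier G. \<forall>K\<in>Z. conjg G a K \<in> Z" and "H \<in> Z"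
    and x: "x \<in> units_GH G Q H"
  shows "eventual_stabiliser G (rep x) \<in> Z"
proof (rule closed_in_Sub_memI[OF Z_closed])
  show "subgroup (eventual_stabiliser G (rep x)) G"
    using subgroup_eventual_stabiliser rep_subset_carrier[OF x] .
  fix F assume "finite F" and "F \<subseteq> carrier G"
  then obtain a where "a \<in> carrier G" and "conjg G a H \<inter> F = eventual_stabiliser G (rep x) \<inter> F"
    using eventual_stabiliser_locally_conjg[OF gen x] by blast
  then show "\<exists>K'\<in>Z. K' \<inter> F = eventual_stabiliser G (rep x) \<inter> F"
    using Z_conj \<open>H \<in> Z\<close> by blast
qed

lemma eventual_stabiliser_conjg_self:
  assumes gen: "fg_sym_gen G Q" and x: "x \<in> units_GH G Q H" and g: "g \<in> carrier G"
    and fixed: "act_GH G Q H g x = x"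
  shows "conjg G g (eventual_stabiliser G (rep x)) = eventual_stabiliser G (rep x)"
proof (rule conjg_eq_self[OF _ g])
  let ?K = "eventual_stabiliser G (rep x)" and ?L = "word_length G Q g"
  show "?K \<subseteq> carrier G"
    unfolding eventual_stabiliser_def by blast
  fix y assume y: "y \<in> carrier G"
  obtain wg where wg: "set wg \<subseteq> Q" "length wg = ?L" "word_val G wg = g"
    using fg_sym_gen_shortest_word[OF gen g] .
  obtain wy where wy: "set wy \<subseteq> Q" "word_val G wy = y"
    using fg_sym_gen_word[OF gen y] .
  \<comment> \<open>chosen so that the conjugated word below, of length |wy| + 2 l(g), has length at most n + l(g)\<close>
  define n where "n = length wy + ?L"
  define c where "c = g <# rep x (n + ?L)"
  have "c \<in> sverts G H"
    unfolding c_def using sverts_lcos_closed g rep_mem_units_GH[OF x] units_GH_subset_sverts[OF x]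
    by blast
  moreover have "x n = cls G Q H n c"
    using fun_cong[OF fixed, of n] unfolding act_GH_def c_def by simp
  ultimately have c_mem: "c \<in> x n"
    using self_mem_cls by simp
  let ?wc = "rev (map (\<lambda>q. inv q) wg) @ wy @ wg"
  have "set (rev (map (\<lambda>q. inv q) wg)) \<subseteq> Q"
    using gen wg(1) unfolding fg_sym_gen_def by auto
  then have wc: "set ?wc \<subseteq> Q" "length ?wc \<le> n + ?L"
    using wg(1,2) wy(1) n_def by auto
  have wc_val: "word_val G ?wc = inv g \<otimes> y \<otimes> g"
    using word_val_conj[OF set_word_subset_carrier[OF wg(1)] set_word_subset_carrier[OF wy(1)]] wg(3) wy(2) by simp
  have "y \<in> ?K \<longleftrightarrow> y <# rep x n = rep x n"
    using eventual_stabiliser_word_iff[OF x wy(1), of n] wy(2) n_def by simp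
  also have "\<dots> \<longleftrightarrow> y <# c = c"
    using units_GH_word_fixes_iff[OF x rep_mem_units_GH[OF x] c_mem wy(1)] wy(2) n_def by simp
  also have "\<dots> \<longleftrightarrow> (inv g \<otimes> y \<otimes> g) <# rep x (n + ?L) = rep x (n + ?L)"
    unfolding c_def using lcos_fixed_iff_conj[OF g rep_subset_carrier[OF x] y] .
  also have "\<dots> \<longleftrightarrow> inv g \<otimes> y \<otimes> g \<in> ?K"
    using eventual_stabiliser_word_iff[OF x wc] wc_val by simp
  finally show "inv g \<otimes> y \<otimes> g \<in> ?K \<longleftrightarrow> y \<in> ?K"
    by simp
qed

end

theorem proposition5p1:
  fixes G :: "('a, 'b) monoid_scheme" and Q :: "'a set" and Z :: "'a set set" and H :: "'a set"
  assumes "group G"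
    and "fg_sym_gen G Q"
    and "URS G Z"
    and "H \<in> Z"
    and "generic_URS G Z"
  shows "principal_GH G Q H"
proof -
  have Z_closed: "closed_in_Sub G Z" and Z_conj: "\<forall>g\<in>carrier G. \<forall>K\<in>Z. conjg G g K \<in> Z"
    using assms(3) unfolding URS_def by blast+
  interpret schreier_graph G Q H
    using assms(1,2,4) Z_closed
    by (intro schreier_graph.intro schreier_graph_axioms.intro)
      (auto simp: fg_sym_gen_def closed_in_Sub_def Sub_def)
  show ?thesis
    unfolding principal_GH_def
  proof (intro ballI impI)
    fix x g
    assume x: "x \<in> units_GH G Q H" and g: "g \<in> carrier G" and fixed: "act_GH G Q H g x = x"
    let ?K = "eventual_stabiliser G (rep x)"
    have "?K \<in> Z"
      using eventual_stabiliser_mem_closed_invariant[OF assms(2) Z_closed Z_conj assms(4) x] .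
    moreover have "conjg G g ?K = ?K"
      using eventual_stabiliser_conjg_self[OF assms(2) x g fixed] .
    ultimately have "g \<in> ?K"
      using assms(5) g unfolding generic_URS_def by blast
    then show "arrow_equiv G x g \<one>\<^bsub>G\<^esub>"
      using arrow_equiv_one_iff[OF x g] by simp
  qed
qed

end
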